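(* Let $\mathfrak X=(X,\xrightarrow{F},\le)$ be a functional WSTS and let $\mathfrak S=\widehat{\mathfrak X}$ be its completion. For every state $s_0\in X$, $Cover_{\mathfrak X}(s_0)=\eta_X^{-1}(Cover_{\mathfrak S}(\eta_X(s_0)))=\eta_X^{-1}(\downarrow Clover_{\mathfrak S}(\eta_X(s_0)))$.
   Context: A functional WSTS $(X,\xrightarrow{F},\le)$: $(X,\le)$ a well partial order, $F$ a finite set of partial monotonic maps (upward-closed domain, monotone on it), $x\to f(x)$ for $x\in\operatorname{dom}f$. $Post^*$: reachability; $Cover(x)=\downarrow Post^*(\downarrow x)$. Completion: an ideal is a nonempty downward-closed directed subset of $X$; $\widehat X=\mathrm{Idl}(X)$ ordered by inclusion (a continuous dcpo, directed lubs being unions); $\eta_X(x)=\downarrow x$. For $f\in F$, $\widehat f$ has domain $\{C\mid C\cap\operatorname{dom}f\neq\emptyset\}$ and $\widehat f(C)=\downarrow f\langle C\cap\operatorname{dom}f\rangle$. $\widehat{\mathfrak X}=(\widehat X,\xrightarrow{\{\widehat f\}},\subseteq)$. In a dcpo, $\operatorname{Lub}(E)=\{\bigvee D\mid D\subseteq E\text{ directed}\}$, and $Clover_{\mathfrak S}(s)=\operatorname{Max}\operatorname{Lub}(Cover_{\mathfrak S}(s))$ (set of maximal elements). *)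

theory Defs
  imports Main
begin

definition wpo :: "'a set \<Rightarrow> ('a \<Rightarrow> 'a \<Rightarrow> bool) \<Rightarrow> bool" where
  "wpo X le \<longleftrightarrow>
     (\<forall>x\<in>X. le x x) \<and>
     (\<forall>x\<in>X. \<forall>y\<in>X. \<forall>z\<in>X. le x y \<longrightarrow> le y z \<longrightarrow> le x z) \<and>
     (\<forall>x\<in>X. \<forall>y\<in>X. le x y \<longrightarrow> le y x \<longrightarrow> x = y) \<and>
     (\<forall>g::nat \<Rightarrow> 'a. (\<forall>i. g i \<in> X) \<longrightarrow> (\<exists>i j. i < j \<and> le (g i) (g j)))"

definition down_set :: "'s set \<Rightarrow> ('s \<Rightarrow> 's \<Rightarrow> bool) \<Rightarrow> 's set \<Rightarrow> 's set" where
  "down_set S le A = {x \<in> S. \<exists>a\<in>A. le x a}"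

definition directed_on :: "('s \<Rightarrow> 's \<Rightarrow> bool) \<Rightarrow> 's set \<Rightarrow> bool" where
  "directed_on le D \<longleftrightarrow> D \<noteq> {} \<and> (\<forall>a\<in>D. \<forall>b\<in>D. \<exists>c\<in>D. le a c \<and> le b c)"

definition is_lub :: "'s set \<Rightarrow> ('s \<Rightarrow> 's \<Rightarrow> bool) \<Rightarrow> 's set \<Rightarrow> 's \<Rightarrow> bool" where
  "is_lub S le D u \<longleftrightarrow> u \<in> S \<and> (\<forall>d\<in>D. le d u) \<and>
      (\<forall>v\<in>S. (\<forall>d\<in>D. le d v) \<longrightarrow> le u v)"

definition Lub :: "'s set \<Rightarrow> ('s \<Rightarrow> 's \<Rightarrow> bool) \<Rightarrow> 's set \<Rightarrow> 's set" where
  "Lub S le E = {u. \<exists>D. D \<subseteq> E \<and> directed_on le D \<and> is_lub S le D u}"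

definition Max_el :: "('s \<Rightarrow> 's \<Rightarrow> bool) \<Rightarrow> 's set \<Rightarrow> 's set" where
  "Max_el le A = {a \<in> A. \<forall>b\<in>A. le a b \<longrightarrow> b = a}"

definition post_star :: "('s \<Rightarrow> 's \<Rightarrow> bool) \<Rightarrow> 's set \<Rightarrow> 's set" where
  "post_star step A = {y. \<exists>x\<in>A. step\<^sup>*\<^sup>* x y}"

definition cover :: "'s set \<Rightarrow> ('s \<Rightarrow> 's \<Rightarrow> bool) \<Rightarrow> ('s \<Rightarrow> 's \<Rightarrow> bool) \<Rightarrow> 's \<Rightarrow> 's set" where
  "cover S le step s = down_set S le (post_star step (down_set S le {s}))"

definition clover :: "'s set \<Rightarrow> ('s \<Rightarrow> 's \<Rightarrow> bool) \<Rightarrow> ('s \<Rightarrow> 's \<Rightarrow> bool) \<Rightarrow> 's \<Rightarrow> 's set" where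
  "clover S le step s = Max_el le (Lub S le (cover S le step s))"

text \<open>Partial maps are modelled as 'a => 'a option; the domain is taken inside X.\<close>
definition pdom :: "'a set \<Rightarrow> ('a \<Rightarrow> 'a option) \<Rightarrow> 'a set" where
  "pdom X f = {x \<in> X. f x \<noteq> None}"

definition pimage :: "('a \<Rightarrow> 'a option) \<Rightarrow> 'a set \<Rightarrow> 'a set" where
  "pimage f A = {y. \<exists>x\<in>A. f x = Some y}"

definition partial_monotone :: "'a set \<Rightarrow> ('a \<Rightarrow> 'a \<Rightarrow> bool) \<Rightarrow> ('a \<Rightarrow> 'a option) \<Rightarrow> bool" where
  "partial_monotone X le f \<longleftrightarrow>
     (\<forall>x\<in>pdom X f. the (f x) \<in> X) \<and>
     (\<forall>x\<in>pdom X f. \<forall>y\<in>X. le x y \<longrightarrow> y \<in> pdom X f) \<and>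
     (\<forall>x\<in>pdom X f. \<forall>y\<in>pdom X f. le x y \<longrightarrow> le (the (f x)) (the (f y)))"

definition functional_wsts :: "'a set \<Rightarrow> ('a \<Rightarrow> 'a \<Rightarrow> bool) \<Rightarrow> ('a \<Rightarrow> 'a option) set \<Rightarrow> bool" where
  "functional_wsts X le F \<longleftrightarrow> wpo X le \<and> finite F \<and> (\<forall>f\<in>F. partial_monotone X le f)"

definition fstep :: "'a set \<Rightarrow> ('a \<Rightarrow> 'a option) set \<Rightarrow> 'a \<Rightarrow> 'a \<Rightarrow> bool" where
  "fstep X F x y \<longleftrightarrow> x \<in> X \<and> (\<exists>f\<in>F. f x = Some y)"

definition ideal :: "'a set \<Rightarrow> ('a \<Rightarrow> 'a \<Rightarrow> bool) \<Rightarrow> 'a set \<Rightarrow> bool" where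
  "ideal X le I \<longleftrightarrow> I \<subseteq> X \<and> I \<noteq> {} \<and>
     (\<forall>x\<in>I. \<forall>y\<in>X. le y x \<longrightarrow> y \<in> I) \<and>
     (\<forall>x\<in>I. \<forall>y\<in>I. \<exists>z\<in>I. le x z \<and> le y z)"

definition Idl :: "'a set \<Rightarrow> ('a \<Rightarrow> 'a \<Rightarrow> bool) \<Rightarrow> 'a set set" where
  "Idl X le = {I. ideal X le I}"

definition eta :: "'a set \<Rightarrow> ('a \<Rightarrow> 'a \<Rightarrow> bool) \<Rightarrow> 'a \<Rightarrow> 'a set" where
  "eta X le x = down_set X le {x}"

definition hat_step :: "'a set \<Rightarrow> ('a \<Rightarrow> 'a \<Rightarrow> bool) \<Rightarrow> ('a \<Rightarrow> 'a option) set \<Rightarrow> 'a set \<Rightarrow> 'a set \<Rightarrow> bool" where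
  "hat_step X le F C D \<longleftrightarrow> C \<in> Idl X le \<and>
     (\<exists>f\<in>F. C \<inter> pdom X f \<noteq> {} \<and> D = down_set X le (pimage f (C \<inter> pdom X f)))"

end

theory Submission
  imports Defs
begin

text \<open>
  The system and its completion simulate each other. A concrete step \<open>y \<rightarrow> f(y)\<close>
  with \<open>y \<in> C\<close> is matched by \<open>C \<rightarrow> \<down>f\<langle>C\<rangle>\<close>. Conversely, if
  \<open>y \<le> f(c)\<close> with \<open>c \<in> C\<close> and \<open>c \<le> c'\<close> for some \<open>c'\<close> reachable from
  \<open>\<down>s\<^sub>0\<close>, then \<open>f\<close> is defined at \<open>c'\<close> (upward-closed domain) and
  \<open>f(c) \<le> f(c')\<close>, so \<open>y\<close> is covered again. Hence every ideal in
  \<open>Cover(\<eta>(s\<^sub>0))\<close> is contained in \<open>Cover(s\<^sub>0)\<close>, and \<open>\<eta>(x) \<in> Cover(\<eta>(s\<^sub>0))\<close>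
  for \<open>x \<in> Cover(s\<^sub>0)\<close>. An ideal \<open>M\<close> is the directed union of the \<open>\<eta>(x)\<close>,
  \<open>x \<in> M\<close>, and directed unions of ideals are ideals; so \<open>Lub(Cover(\<eta>(s\<^sub>0)))\<close>
  consists exactly of the ideals contained in \<open>Cover(s\<^sub>0)\<close>, and the clover of its
  maximal ones. By Zorn's lemma every such ideal lies below a maximal one.
\<close>

lemma ideal_subset: "ideal X le I \<Longrightarrow> I \<subseteq> X"
  unfolding ideal_def by blast

lemma ideal_downward: "ideal X le I \<Longrightarrow> x \<in> I \<Longrightarrow> y \<in> X \<Longrightarrow> le y x \<Longrightarrow> y \<in> I"
  unfolding ideal_def by blast

lemma ideal_directed: "ideal X le I \<Longrightarrow> x \<in> I \<Longrightarrow> y \<in> I \<Longrightarrow> \<exists>z\<in>I. le x z \<and> le y z"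
  unfolding ideal_def by blast

lemma ideal_Union_directed:
  assumes dir: "directed_on (\<subseteq>) D" and D: "D \<subseteq> Idl X le"
  shows "ideal X le (\<Union>D)"
  unfolding ideal_def
proof (intro conjI ballI impI)
  have ideals: "ideal X le d" if "d \<in> D" for d
    using D that by (auto simp: Idl_def)
  show "\<Union>D \<subseteq> X"
    using ideals ideal_subset by blast
  obtain d where "d \<in> D"
    using dir unfolding directed_on_def by blast
  moreover obtain x where "x \<in> d"
    using ideals[OF calculation] unfolding ideal_def by blast
  ultimately show "\<Union>D \<noteq> {}"
    by blast
next
  fix x y assume "x \<in> \<Union>D" "y \<in> X" "le y x"
  then obtain d where "d \<in> D" "x \<in> d"
    by blast
  then show "y \<in> \<Union>D"
    using ideal_downward[of X le d x y] \<open>y \<in> X\<close> \<open>le y x\<close> D by (auto simp: Idl_def)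
next
  fix x y assume "x \<in> \<Union>D" "y \<in> \<Union>D"
  then obtain d1 d2 where "d1 \<in> D" "d2 \<in> D" "x \<in> d1" "y \<in> d2"
    by blast
  moreover obtain d where "d \<in> D" "d1 \<subseteq> d" "d2 \<subseteq> d"
    using dir calculation(1,2) unfolding directed_on_def by blast
  moreover have "ideal X le d"
    using D \<open>d \<in> D\<close> by (auto simp: Idl_def)
  ultimately obtain z where "z \<in> d" "le x z" "le y z"
    using ideal_directed[of X le d x y] by blast
  then show "\<exists>z\<in>\<Union>D. le x z \<and> le y z"
    using \<open>d \<in> D\<close> by blast
qed

lemma ideal_below_maximal_ideal:
  assumes "ideal X le I" and "I \<subseteq> C"
  obtains M where "M \<in> Max_el (\<subseteq>) {M \<in> Idl X le. M \<subseteq> C}" and "I \<subseteq> M"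
proof -
  define A where "A = {M \<in> Idl X le. M \<subseteq> C \<and> I \<subseteq> M}"
  have "\<exists>M\<in>A. \<forall>N\<in>A. M \<subseteq> N \<longrightarrow> N = M"
  proof (rule subset_Zorn_nonempty)
    have "I \<in> A"
      using assms by (simp add: A_def Idl_def)
    then show "A \<noteq> {}"
      by blast
  next
    fix Ch assume "Ch \<noteq> {}" and "subset.chain A Ch"
    then have "Ch \<subseteq> A" and comparable: "\<forall>a\<in>Ch. \<forall>b\<in>Ch. a \<subseteq> b \<or> b \<subseteq> a"
      by (simp_all add: subset_chain_def)
    have "directed_on (\<subseteq>) Ch"
      unfolding directed_on_def
    proof (intro conjI ballI)
      fix a b assume "a \<in> Ch" "b \<in> Ch"
      then have "a \<subseteq> b \<or> b \<subseteq> a"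
        using comparable by blast
      then show "\<exists>c\<in>Ch. a \<subseteq> c \<and> b \<subseteq> c"
        using \<open>a \<in> Ch\<close> \<open>b \<in> Ch\<close> by (metis subset_refl)
    qed (fact \<open>Ch \<noteq> {}\<close>)
    moreover have "Ch \<subseteq> Idl X le"
      using \<open>Ch \<subseteq> A\<close> by (auto simp: A_def)
    ultimately have "\<Union>Ch \<in> Idl X le"
      by (simp add: ideal_Union_directed Idl_def)
    moreover have "\<Union>Ch \<subseteq> C"
      using \<open>Ch \<subseteq> A\<close> by (auto simp: A_def)
    moreover obtain M where "M \<in> Ch"
      using \<open>Ch \<noteq> {}\<close> by blast
    then have "I \<subseteq> \<Union>Ch"
      using \<open>Ch \<subseteq> A\<close> by (auto simp: A_def)
    ultimately show "\<Union>Ch \<in> A"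
      by (simp add: A_def)
  qed
  then obtain M where "M \<in> A" and "\<forall>N\<in>A. M \<subseteq> N \<longrightarrow> N = M"
    by blast
  then have "M \<in> Max_el (\<subseteq>) {M \<in> Idl X le. M \<subseteq> C}"
    unfolding A_def Max_el_def by (blast intro: subset_trans)
  then show ?thesis
    using that \<open>M \<in> A\<close> by (simp add: A_def)
qed

lemma down_set_Max_el_ideals_iff:
  assumes "ideal X le I"
  shows "I \<in> down_set (Idl X le) (\<subseteq>) (Max_el (\<subseteq>) {M \<in> Idl X le. M \<subseteq> C}) \<longleftrightarrow> I \<subseteq> C"
proof
  assume "I \<in> down_set (Idl X le) (\<subseteq>) (Max_el (\<subseteq>) {M \<in> Idl X le. M \<subseteq> C})"
  then show "I \<subseteq> C"
    unfolding down_set_def Max_el_def by blast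
next
  assume "I \<subseteq> C"
  with assms obtain M where "M \<in> Max_el (\<subseteq>) {M \<in> Idl X le. M \<subseteq> C}" "I \<subseteq> M"
    by (rule ideal_below_maximal_ideal)
  then show "I \<in> down_set (Idl X le) (\<subseteq>) (Max_el (\<subseteq>) {M \<in> Idl X le. M \<subseteq> C})"
    using assms unfolding down_set_def Idl_def by blast
qed

locale monotone_partial_maps =
  fixes X :: "'a set" and le :: "'a \<Rightarrow> 'a \<Rightarrow> bool" and F :: "('a \<Rightarrow> 'a option) set"
  assumes reflexive: "x \<in> X \<Longrightarrow> le x x"
    and transitive: "x \<in> X \<Longrightarrow> y \<in> X \<Longrightarrow> z \<in> X \<Longrightarrow> le x y \<Longrightarrow> le y z \<Longrightarrow> le x z"
    and monotone_maps: "f \<in> F \<Longrightarrow> partial_monotone X le f"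

lemma functional_wsts_imp_monotone_partial_maps:
  "functional_wsts X le F \<Longrightarrow> monotone_partial_maps X le F"
  unfolding functional_wsts_def wpo_def by unfold_locales blast+

context monotone_partial_maps
begin

lemma image_in_X: "f \<in> F \<Longrightarrow> c \<in> X \<Longrightarrow> f c = Some a \<Longrightarrow> a \<in> X"
  using monotone_maps unfolding partial_monotone_def pdom_def by force

lemma defined_upward: "f \<in> F \<Longrightarrow> c \<in> X \<Longrightarrow> f c \<noteq> None \<Longrightarrow> d \<in> X \<Longrightarrow> le c d \<Longrightarrow> f d \<noteq> None"
  using monotone_maps unfolding partial_monotone_def pdom_def by blast

lemma image_mono:
  "f \<in> F \<Longrightarrow> c \<in> X \<Longrightarrow> f c = Some a \<Longrightarrow> d \<in> X \<Longrightarrow> f d = Some b \<Longrightarrow> le c d \<Longrightarrow> le a b"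
  using monotone_maps unfolding partial_monotone_def pdom_def by force

lemma eta_ideal: "x \<in> X \<Longrightarrow> ideal X le (eta X le x)"
  unfolding ideal_def eta_def down_set_def using reflexive transitive by blast

lemma eta_Idl: "x \<in> X \<Longrightarrow> eta X le x \<in> Idl X le"
  using eta_ideal by (simp add: Idl_def)

lemma mem_eta_self: "x \<in> X \<Longrightarrow> x \<in> eta X le x"
  using reflexive unfolding eta_def down_set_def by blast

lemma eta_mono: "x \<in> X \<Longrightarrow> z \<in> X \<Longrightarrow> le x z \<Longrightarrow> eta X le x \<subseteq> eta X le z"
  using transitive unfolding eta_def down_set_def by blast

lemma eta_subset_ideal_iff:
  assumes "ideal X le I" and "x \<in> X"
  shows "eta X le x \<subseteq> I \<longleftrightarrow> x \<in> I"
proof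
  show "eta X le x \<subseteq> I \<Longrightarrow> x \<in> I"
    using mem_eta_self[OF \<open>x \<in> X\<close>] by blast
  show "eta X le x \<subseteq> I" if "x \<in> I"
  proof
    fix y assume "y \<in> eta X le x"
    then have "y \<in> X" and "le y x"
      by (simp_all add: eta_def down_set_def)
    then show "y \<in> I"
      using ideal_downward[OF assms(1) \<open>x \<in> I\<close>] by blast
  qed
qed

lemma hat_step_ideal:
  assumes "hat_step X le F C D"
  shows "ideal X le D"
proof -
  obtain f where f: "f \<in> F" and C: "ideal X le C" and meets: "C \<inter> pdom X f \<noteq> {}"
    and D: "D = down_set X le (pimage f (C \<inter> pdom X f))"
    using assms unfolding hat_step_def Idl_def by auto
  have CX: "C \<subseteq> X"
    using C by (rule ideal_subset)
  have mem_D: "y \<in> D \<longleftrightarrow> y \<in> X \<and> (\<exists>c a. c \<in> C \<and> f c = Some a \<and> le y a)" for y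
    using CX unfolding D down_set_def pimage_def pdom_def by auto
  have image_in_D: "a \<in> D" if "c \<in> C" "f c = Some a" for c a
    using that mem_D image_in_X[OF f] reflexive CX by blast
  have "D \<noteq> {}"
    using meets image_in_D by (auto simp: pdom_def)
  moreover have "y \<in> D" if "x \<in> D" "y \<in> X" "le y x" for x y
  proof -
    obtain c a where "x \<in> X" "c \<in> C" "f c = Some a" "le x a"
      using \<open>x \<in> D\<close> mem_D by blast
    moreover have "a \<in> X"
      using image_in_X[OF f] calculation CX by blast
    ultimately show ?thesis
      using mem_D transitive[of y x a] that by blast
  qed
  moreover have "\<exists>w\<in>D. le x w \<and> le y w" if "x \<in> D" "y \<in> D" for x y
  proof -
    obtain a c1 where a: "x \<in> X" "c1 \<in> C" "f c1 = Some a" "le x a"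
      using \<open>x \<in> D\<close> mem_D by blast
    obtain b c2 where b: "y \<in> X" "c2 \<in> C" "f c2 = Some b" "le y b"
      using \<open>y \<in> D\<close> mem_D by blast
    obtain c where c: "c \<in> C" "le c1 c" "le c2 c"
      using ideal_directed[OF C a(2) b(2)] by blast
    have "f c \<noteq> None"
      using defined_upward[OF f] a b c CX by blast
    then obtain w where w: "f c = Some w"
      by blast
    have "le a w" "le b w"
      using image_mono[OF f] a b c w CX by blast+
    then have "le x w" "le y w"
      using a b transitive image_in_X[OF f] c w CX by blast+
    then show ?thesis
      using image_in_D[OF c(1) w] by blast
  qed
  ultimately show ?thesis
    using mem_D unfolding ideal_def by blast
qed

lemma rtranclp_hat_step_ideal:
  "(hat_step X le F)\<^sup>*\<^sup>* K J \<Longrightarrow> ideal X le K \<Longrightarrow> ideal X le J"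
  by (induction rule: rtranclp_induct) (auto intro: hat_step_ideal)

lemma rtranclp_fstep_in_X: "(fstep X F)\<^sup>*\<^sup>* z y \<Longrightarrow> z \<in> X \<Longrightarrow> y \<in> X"
  by (induction rule: rtranclp_induct) (auto simp: fstep_def intro: image_in_X)

lemma hat_step_simulates_fstep:
  assumes "(fstep X F)\<^sup>*\<^sup>* z y" and K: "ideal X le K" and "z \<in> K"
  shows "\<exists>J. (hat_step X le F)\<^sup>*\<^sup>* K J \<and> y \<in> J"
  using assms(1)
proof (induction rule: rtranclp_induct)
  case base
  then show ?case
    using \<open>z \<in> K\<close> by blast
next
  case (step y w)
  then obtain J where J: "(hat_step X le F)\<^sup>*\<^sup>* K J" "y \<in> J"
    by blast
  obtain f where f: "f \<in> F" "f y = Some w" and "y \<in> X"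
    using step.hyps(2) by (auto simp: fstep_def)
  let ?D = "down_set X le (pimage f (J \<inter> pdom X f))"
  have y_dom: "y \<in> J \<inter> pdom X f"
    using J(2) \<open>y \<in> X\<close> f(2) by (simp add: pdom_def)
  have "hat_step X le F J ?D"
    using rtranclp_hat_step_ideal[OF J(1) K] f(1) y_dom by (auto simp: hat_step_def Idl_def)
  moreover have "w \<in> ?D"
    using image_in_X[OF f(1) \<open>y \<in> X\<close> f(2)] reflexive y_dom f(2)
    unfolding down_set_def pimage_def by blast
  ultimately show ?case
    using J(1) by (meson rtranclp.rtrancl_into_rtrancl)
qed

lemma fstep_simulates_hat_step:
  assumes "(hat_step X le F)\<^sup>*\<^sup>* K J" and K: "ideal X le K" and "y \<in> J"
  shows "\<exists>z\<in>K. \<exists>y'. (fstep X F)\<^sup>*\<^sup>* z y' \<and> le y y'"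
  using assms(1,3)
proof (induction arbitrary: y rule: rtranclp_induct)
  case base
  then show ?case
    using ideal_subset[OF K] reflexive by blast
next
  case (step C D)
  obtain f where f: "f \<in> F" and D: "D = down_set X le (pimage f (C \<inter> pdom X f))"
    using step.hyps(2) unfolding hat_step_def by auto
  obtain a c where ya: "y \<in> X" "le y a" and c: "c \<in> C" "c \<in> X" "f c = Some a"
    using step.prems D unfolding down_set_def pimage_def pdom_def by blast
  obtain z c' where z: "z \<in> K" "(fstep X F)\<^sup>*\<^sup>* z c'" "le c c'"
    using step.IH[OF c(1)] by blast
  have "c' \<in> X"
    using rtranclp_fstep_in_X[OF z(2)] z(1) ideal_subset[OF K] by blast
  then obtain a' where a': "f c' = Some a'"
    using defined_upward[OF f c(2) _ _ z(3)] c(3) by blast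
  have "fstep X F c' a'"
    using \<open>c' \<in> X\<close> f a' by (auto simp: fstep_def)
  with z(2) have "(fstep X F)\<^sup>*\<^sup>* z a'"
    by (rule rtranclp.rtrancl_into_rtrancl)
  moreover have "le y a'"
    using transitive[OF ya(1) image_in_X[OF f c(2,3)] image_in_X[OF f \<open>c' \<in> X\<close> a'] ya(2)]
      image_mono[OF f c(2,3) \<open>c' \<in> X\<close> a' z(3)] by blast
  ultimately show ?case
    using z(1) by blast
qed

lemma cover_subset_X: "cover X le (fstep X F) s0 \<subseteq> X"
  unfolding cover_def down_set_def by blast

lemma eta_mem_cover_completion:
  assumes "s0 \<in> X" and x: "x \<in> cover X le (fstep X F) s0"
  shows "eta X le x \<in> cover (Idl X le) (\<subseteq>) (hat_step X le F) (eta X le s0)"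
proof -
  obtain y z where "x \<in> X" "le x y" "z \<in> X" "le z s0" and run: "(fstep X F)\<^sup>*\<^sup>* z y"
    using x unfolding cover_def down_set_def post_star_def by blast
  obtain J where J: "(hat_step X le F)\<^sup>*\<^sup>* (eta X le z) J" "y \<in> J"
    using hat_step_simulates_fstep[OF run eta_ideal mem_eta_self] \<open>z \<in> X\<close> by blast
  have "ideal X le J"
    using rtranclp_hat_step_ideal[OF J(1) eta_ideal[OF \<open>z \<in> X\<close>]] .
  moreover have "x \<in> J"
    using ideal_downward[OF \<open>ideal X le J\<close> J(2) \<open>x \<in> X\<close> \<open>le x y\<close>] .
  ultimately have "eta X le x \<subseteq> J"
    using eta_subset_ideal_iff \<open>x \<in> X\<close> by blast
  moreover have "eta X le z \<subseteq> eta X le s0"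
    using eta_mono \<open>z \<in> X\<close> \<open>le z s0\<close> \<open>s0 \<in> X\<close> by blast
  ultimately show ?thesis
    using J(1) eta_Idl \<open>x \<in> X\<close> \<open>z \<in> X\<close> unfolding cover_def down_set_def post_star_def by blast
qed

lemma cover_completion_subset_cover:
  assumes "I \<in> cover (Idl X le) (\<subseteq>) (hat_step X le F) (eta X le s0)"
  shows "I \<in> Idl X le" and "I \<subseteq> cover X le (fstep X F) s0"
proof -
  obtain J K where I: "I \<in> Idl X le" "I \<subseteq> J" and K: "K \<in> Idl X le" "K \<subseteq> eta X le s0"
    and run: "(hat_step X le F)\<^sup>*\<^sup>* K J"
    using assms unfolding cover_def down_set_def post_star_def by blast
  show "I \<in> Idl X le"
    using I(1) .
  show "I \<subseteq> cover X le (fstep X F) s0"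
  proof
    fix y assume "y \<in> I"
    have "ideal X le K" "y \<in> J"
      using K(1) I(2) \<open>y \<in> I\<close> by (auto simp: Idl_def)
    then obtain z y' where "z \<in> K" "(fstep X F)\<^sup>*\<^sup>* z y'" "le y y'"
      using fstep_simulates_hat_step[OF run] by blast
    moreover have "y \<in> X"
      using \<open>y \<in> I\<close> I(1) ideal_subset by (auto simp: Idl_def)
    ultimately show "y \<in> cover X le (fstep X F) s0"
      using K(2) unfolding cover_def down_set_def post_star_def eta_def by blast
  qed
qed

lemma ideal_is_lub_etas:
  assumes "ideal X le M"
  shows "is_lub (Idl X le) (\<subseteq>) (eta X le ` M) M"
  unfolding is_lub_def
proof (intro conjI ballI impI)
  have MX: "M \<subseteq> X"
    using assms by (rule ideal_subset)
  show "M \<in> Idl X le"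
    using assms by (simp add: Idl_def)
  show "d \<subseteq> M" if "d \<in> eta X le ` M" for d
    using that eta_subset_ideal_iff[OF assms] MX by blast
  show "M \<subseteq> V" if "\<forall>d\<in>eta X le ` M. d \<subseteq> V" for V
    using that mem_eta_self MX by blast
qed

lemma directed_etas:
  assumes "ideal X le M"
  shows "directed_on (\<subseteq>) (eta X le ` M)"
  unfolding directed_on_def
proof (intro conjI ballI)
  show "eta X le ` M \<noteq> {}"
    using assms unfolding ideal_def by blast
  fix a b assume "a \<in> eta X le ` M" "b \<in> eta X le ` M"
  then obtain x y where "x \<in> M" "y \<in> M" "a = eta X le x" "b = eta X le y"
    by blast
  moreover obtain z where "z \<in> M" "le x z" "le y z"
    using ideal_directed[OF assms \<open>x \<in> M\<close> \<open>y \<in> M\<close>] by blast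
  moreover have "x \<in> X" "y \<in> X" "z \<in> X"
    using ideal_subset[OF assms] calculation by blast+
  ultimately show "\<exists>c\<in>eta X le ` M. a \<subseteq> c \<and> b \<subseteq> c"
    using eta_mono by blast
qed

lemma Lub_cover_completion:
  assumes "s0 \<in> X"
  shows "Lub (Idl X le) (\<subseteq>) (cover (Idl X le) (\<subseteq>) (hat_step X le F) (eta X le s0))
           = {M \<in> Idl X le. M \<subseteq> cover X le (fstep X F) s0}"
    (is "Lub _ _ ?CS = {M \<in> _. M \<subseteq> ?C}")
proof (intro equalityI subsetI)
  fix M assume "M \<in> Lub (Idl X le) (\<subseteq>) ?CS"
  then obtain D where D: "D \<subseteq> ?CS" "directed_on (\<subseteq>) D" and lub: "is_lub (Idl X le) (\<subseteq>) D M"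
    unfolding Lub_def by blast
  have "D \<subseteq> Idl X le" and D_C: "\<Union>D \<subseteq> ?C"
    using D(1) cover_completion_subset_cover by blast+
  then have "\<Union>D \<in> Idl X le"
    using ideal_Union_directed[OF D(2)] by (simp add: Idl_def)
  then have "M \<subseteq> \<Union>D"
    using lub unfolding is_lub_def by blast
  then show "M \<in> {M \<in> Idl X le. M \<subseteq> ?C}"
    using lub D_C unfolding is_lub_def by blast
next
  fix M assume "M \<in> {M \<in> Idl X le. M \<subseteq> ?C}"
  then have "ideal X le M" and "eta X le ` M \<subseteq> ?CS"
    using eta_mem_cover_completion[OF assms] by (auto simp: Idl_def)
  then show "M \<in> Lub (Idl X le) (\<subseteq>) ?CS"
    using directed_etas ideal_is_lub_etas unfolding Lub_def by blast
qed

lemma eta_mem_cover_completion_iff: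
  assumes "s0 \<in> X" and "x \<in> X"
  shows "eta X le x \<in> cover (Idl X le) (\<subseteq>) (hat_step X le F) (eta X le s0)
           \<longleftrightarrow> x \<in> cover X le (fstep X F) s0"
  using eta_mem_cover_completion[OF assms(1)] cover_completion_subset_cover(2)
    mem_eta_self[OF assms(2)] by blast

lemma eta_subset_cover_iff:
  assumes "s0 \<in> X" and "x \<in> X"
  shows "eta X le x \<subseteq> cover X le (fstep X F) s0 \<longleftrightarrow> x \<in> cover X le (fstep X F) s0"
  using eta_mem_cover_completion[OF assms(1)] cover_completion_subset_cover(2)
    mem_eta_self[OF assms(2)] by blast

lemma eta_mem_down_clover_iff:
  assumes "s0 \<in> X" and "x \<in> X"
  shows "eta X le x \<in> down_set (Idl X le) (\<subseteq>) (clover (Idl X le) (\<subseteq>) (hat_step X le F) (eta X le s0))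
           \<longleftrightarrow> x \<in> cover X le (fstep X F) s0"
  unfolding clover_def Lub_cover_completion[OF assms(1)]
    down_set_Max_el_ideals_iff[OF eta_ideal[OF assms(2)]]
  by (rule eta_subset_cover_iff[OF assms])

end

theorem proposition3p9:
  fixes X :: "'a set" and le :: "'a \<Rightarrow> 'a \<Rightarrow> bool" and F :: "('a \<Rightarrow> 'a option) set"
    and s0 :: 'a
  assumes "functional_wsts X le F" and "s0 \<in> X"
  shows "cover X le (fstep X F) s0
           = {x \<in> X. eta X le x \<in> cover (Idl X le) (\<subseteq>) (hat_step X le F) (eta X le s0)}
       \<and> {x \<in> X. eta X le x \<in> cover (Idl X le) (\<subseteq>) (hat_step X le F) (eta X le s0)}
           = {x \<in> X. eta X le x \<in> down_set (Idl X le) (\<subseteq>)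
                 (clover (Idl X le) (\<subseteq>) (hat_step X le F) (eta X le s0))}"
proof -
  interpret monotone_partial_maps X le F
    using assms(1) by (rule functional_wsts_imp_monotone_partial_maps)
  have "x \<in> X" if "x \<in> cover X le (fstep X F) s0" for x
    using that cover_subset_X by blast
  then show ?thesis
    using eta_mem_cover_completion_iff[OF assms(2)] eta_mem_down_clover_iff[OF assms(2)] by blast
qed

end
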